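(* Let $p$ be a prime and $G$ a $p$-group of order $p^m$ with $|G/Z(G)|=p^3$. (1) If $G$ has no abelian maximal subgroup, then $$A_G(t)=\frac{1}{p^m}\left(\frac{p^{m-3}}{1-p^mt}+\frac{p^m-p^{m-3}}{1-p^{m-2}t}\right).$$ (2) If $G$ possesses an abelian maximal subgroup, then $$A_G(t)=\frac{1}{p^m}\left(\frac{p^{m-3}}{1-p^mt}+\frac{p^{m-1}-p^{m-3}}{1-p^{m-1}t}+\frac{p^m-p^{m-1}}{1-p^{m-2}t}\right).$$
   Context: For a finite group $G$ and $n\ge0$, let $\alpha_{G,n}$ be the number of orbits of $G$ acting on $G^n$ by simultaneous conjugation, and $A_G(t)=\sum_{n\ge0}\alpha_{G,n}t^n$, viewed as a rational function of $t$. *)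

theory Defs
  imports "HOL-Algebra.Algebra" "HOL-Computational_Algebra.Formal_Power_Series"
begin

definition group_center :: "('a, 'b) monoid_scheme \<Rightarrow> 'a set" where
  "group_center G = {z \<in> carrier G. \<forall>g \<in> carrier G. z \<otimes>\<^bsub>G\<^esub> g = g \<otimes>\<^bsub>G\<^esub> z}"

definition tuples :: "('a, 'b) monoid_scheme \<Rightarrow> nat \<Rightarrow> (nat \<Rightarrow> 'a) set" where
  "tuples G n = ({..<n} \<rightarrow>\<^sub>E carrier G)"

definition conj_tuple :: "('a, 'b) monoid_scheme \<Rightarrow> nat \<Rightarrow> 'a \<Rightarrow> (nat \<Rightarrow> 'a) \<Rightarrow> (nat \<Rightarrow> 'a)" where
  "conj_tuple G n g x = (\<lambda>i\<in>{..<n}. g \<otimes>\<^bsub>G\<^esub> x i \<otimes>\<^bsub>G\<^esub> inv\<^bsub>G\<^esub> g)"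

definition conj_rel :: "('a, 'b) monoid_scheme \<Rightarrow> nat \<Rightarrow> ((nat \<Rightarrow> 'a) \<times> (nat \<Rightarrow> 'a)) set" where
  "conj_rel G n = {(x, y). x \<in> tuples G n \<and> y \<in> tuples G n \<and>
                     (\<exists>g \<in> carrier G. y = conj_tuple G n g x)}"

definition alpha :: "('a, 'b) monoid_scheme \<Rightarrow> nat \<Rightarrow> nat" where
  "alpha G n = card (tuples G n // conj_rel G n)"

definition A_series :: "('a, 'b) monoid_scheme \<Rightarrow> real fps" where
  "A_series G = Abs_fps (\<lambda>n. real (alpha G n))"

definition maximal_subgroup :: "'a set \<Rightarrow> ('a, 'b) monoid_scheme \<Rightarrow> bool" where
  "maximal_subgroup H G \<longleftrightarrow> subgroup H G \<and> H \<noteq> carrier G \<and>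
     (\<forall>K. subgroup K G \<and> H \<subseteq> K \<longrightarrow> K = H \<or> K = carrier G)"

definition abelian_subset :: "'a set \<Rightarrow> ('a, 'b) monoid_scheme \<Rightarrow> bool" where
  "abelian_subset H G \<longleftrightarrow> (\<forall>x \<in> H. \<forall>y \<in> H. x \<otimes>\<^bsub>G\<^esub> y = y \<otimes>\<^bsub>G\<^esub> x)"

definition geom :: "real \<Rightarrow> real fps" where
  "geom c = inverse (1 - fps_const c * fps_X)"

end

theory Submission
  imports Defs
begin

text \<open>
  By Burnside's lemma \<open>\<alpha>\<^sub>G\<^sub>,\<^sub>n \<cdot> |G|\<close> is the sum of \<open>|C(g)|\<^sup>n\<close> over \<open>g \<in> G\<close>, so \<open>A\<^sub>G(t)\<close>
  is determined by how many elements have centralizers of each order. If \<open>|G : Z| = p\<^sup>3\<close>, then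
  \<open>Z \<subset> C(g) \<subset> G\<close> for non-central \<open>g\<close>, so \<open>|C(g)|\<close> is \<open>p\<^sup>m\<^sup>-\<^sup>2\<close> or \<open>p\<^sup>m\<^sup>-\<^sup>1\<close>.
  A centralizer of index \<open>p\<close> is a maximal subgroup, and it is abelian because its center contains
  \<open>Z\<close> and \<open>g\<close> and so has index at most \<open>p\<close> in it. Conversely, an abelian maximal subgroup \<open>A\<close> has index \<open>p\<close> (maximal subgroups of
  \<open>p\<close>-groups are normal), contains \<open>Z\<close>, and equals \<open>C(a)\<close> for every \<open>a \<in> A - Z\<close>; for
  \<open>g \<notin> A\<close> the group \<open>C(g) \<inter> A\<close> lies in \<open>Z\<close>, which forces \<open>|C(g)| = p\<^sup>m\<^sup>-\<^sup>2\<close>. So the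
  elements with centralizer of index \<open>p\<close> are those of \<open>A - Z\<close> if such an \<open>A\<close> exists, and there
  are none otherwise.
\<close>

unbundle fps_syntax

definition centralizer :: "('a, 'b) monoid_scheme \<Rightarrow> 'a set \<Rightarrow> 'a set" where
  "centralizer G S = {x \<in> carrier G. \<forall>s\<in>S. x \<otimes>\<^bsub>G\<^esub> s = s \<otimes>\<^bsub>G\<^esub> x}"

definition elems_with_centralizer_card :: "('a, 'b) monoid_scheme \<Rightarrow> nat \<Rightarrow> 'a set" where
  "elems_with_centralizer_card G k = {g \<in> carrier G. card (centralizer G {g}) = k}"

lemma geom_nth: "geom c $ n = c ^ n"
proof -
  have "(1 - fps_const c * fps_X) * Abs_fps (\<lambda>n. c ^ n) = 1"
  proof (rule fps_ext)
    show "((1 - fps_const c * fps_X) * Abs_fps (\<lambda>n. c ^ n)) $ n = (1::real fps) $ n" for n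
      by (cases n) (simp_all add: algebra_simps mult.assoc fps_mult_left_const_nth)
  qed
  then have "geom c = Abs_fps (\<lambda>n. c ^ n)"
    unfolding geom_def by (rule fps_inverse_unique)
  then show ?thesis by simp
qed

lemma sum_three_values:
  fixes h :: "'b \<Rightarrow> 'c::comm_semiring_1"
  assumes "finite S" "f ` S \<subseteq> {a, b, c}" "distinct [a, b, c]"
  shows "(\<Sum>x\<in>S. h (f x)) = of_nat (card {x\<in>S. f x = a}) * h a
           + of_nat (card {x\<in>S. f x = b}) * h b + of_nat (card {x\<in>S. f x = c}) * h c"
proof -
  have "(\<Sum>x\<in>S. h (f x)) = (\<Sum>y\<in>{a, b, c}. \<Sum>x\<in>{x\<in>S. f x = y}. h (f x))"
    using sum.group[OF assms(1) _ assms(2), of "\<lambda>x. h (f x)"] by simp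
  also have "\<dots> = (\<Sum>y\<in>{a, b, c}. of_nat (card {x\<in>S. f x = y}) * h y)"
    by (intro sum.cong) auto
  finally show ?thesis
    using assms(3) by (simp add: algebra_simps)
qed

section \<open>Fixed points of actions of p-groups\<close>

context group_action
begin

lemma fixed_point_in_orbit_eq:
  assumes x: "x \<in> E" and y: "y \<in> orbit G \<phi> x" and fixed: "\<forall>g\<in>carrier G. \<phi> g y = y"
  shows "y = x"
proof -
  interpret group G
    using group_hom by (rule group_hom.axioms(1))
  obtain g where g: "g \<in> carrier G" and y_eq: "y = \<phi> g x"
    using y unfolding orbit_def by blast
  have "x = \<phi> (inv g) y"
    using orbit_sym_aux[OF g x y_eq[symmetric]] ..
  then show ?thesis
    using fixed g by simp
qed

lemma card_orbit_prime_power: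
  assumes p: "Factorial_Ring.prime p" and order: "order G = p ^ k" and x: "x \<in> E"
  shows "\<exists>j. card (orbit G \<phi> x) = p ^ j"
proof -
  have "card (orbit G \<phi> x) dvd p ^ k"
    using orbit_stabilizer_theorem[OF x] order by (metis dvd_triv_left)
  then show ?thesis
    using divides_primepow_nat[OF p] by blast
qed

lemma card_orbit_mod_prime:
  assumes p: "Factorial_Ring.prime p" and order: "order G = p ^ k" and x: "x \<in> E"
  defines "F \<equiv> {y \<in> E. \<forall>g\<in>carrier G. \<phi> g y = y}"
  shows "card (orbit G \<phi> x) mod p = card (orbit G \<phi> x \<inter> F) mod p"
proof (cases "x \<in> F")
  case True
  then have "orbit G \<phi> x = {x}"
    using orbit_refl[OF x] unfolding orbit_def F_def by blast
  then show ?thesis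
    using True by simp
next
  case False
  have "card (orbit G \<phi> x) \<noteq> 1"
  proof
    assume "card (orbit G \<phi> x) = 1"
    then have "orbit G \<phi> x = {x}"
      using orbit_refl[OF x] by (metis card_1_singletonE singletonD)
    then have "x \<in> F"
      using x element_image unfolding orbit_def F_def by blast
    with False show False ..
  qed
  moreover obtain j where "card (orbit G \<phi> x) = p ^ j"
    using card_orbit_prime_power[OF p order x] by blast
  ultimately have "p dvd card (orbit G \<phi> x)"
    by (cases j) auto
  moreover have "orbit G \<phi> x \<inter> F = {}"
    using False fixed_point_in_orbit_eq[OF x] unfolding F_def by blast
  ultimately show ?thesis
    by simp
qed

lemma card_fixed_points_mod_prime:
  assumes p: "Factorial_Ring.prime p" and order: "order G = p ^ k" and fin: "finite E"
  defines "F \<equiv> {x \<in> E. \<forall>g\<in>carrier G. \<phi> g x = x}"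
  shows "card F mod p = card E mod p"
proof -
  have orbit_mod: "card orb mod p = card (orb \<inter> F) mod p" if "orb \<in> orbits G E \<phi>" for orb
    using that card_orbit_mod_prime[OF p order] unfolding orbits_def F_def by blast
  have finite_orbits: "finite orb" if "orb \<in> orbits G E \<phi>" for orb
    using that orbits_coverture fin by (metis Union_upper finite_subset)
  have "card E mod p = (\<Sum>orb\<in>orbits G E \<phi>. card orb) mod p"
    using disjoint_sum[OF fin, of "\<lambda>_. 1 :: nat"] by simp
  also have "\<dots> = (\<Sum>orb\<in>orbits G E \<phi>. card orb mod p) mod p"
    by (simp add: mod_sum_eq)
  also have "\<dots> = (\<Sum>orb\<in>orbits G E \<phi>. card (orb \<inter> F) mod p) mod p"
    using orbit_mod by simp
  also have "\<dots> = (\<Sum>orb\<in>orbits G E \<phi>. card (orb \<inter> F)) mod p"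
    by (simp add: mod_sum_eq)
  also have "\<dots> = (\<Sum>x\<in>E. if x \<in> F then 1 else 0) mod p"
    using disjoint_sum[OF fin, of "\<lambda>x. if x \<in> F then 1 else 0 :: nat"] finite_orbits
    by (simp add: sum.If_cases Int_def)
  also have "\<dots> = card F mod p"
    using fin by (simp add: sum.If_cases F_def Int_def)
  finally show ?thesis ..
qed

end

section \<open>Centralizers and Burnside's lemma\<close>

context group
begin

lemma subgroup_centralizer:
  assumes "S \<subseteq> carrier G"
  shows "subgroup (centralizer G S) G"
proof (rule subgroupI)
  show "centralizer G S \<subseteq> carrier G"
    unfolding centralizer_def by auto
  have "\<one> \<in> centralizer G S"
    using assms by (auto simp: centralizer_def)
  then show "centralizer G S \<noteq> {}"
    by blast
next
  fix x assume x: "x \<in> centralizer G S"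
  have "inv x \<otimes> s = s \<otimes> inv x" if s: "s \<in> S" for s
  proof -
    have xs: "x \<otimes> s = s \<otimes> x" and s_carrier: "s \<in> carrier G" and x_carrier: "x \<in> carrier G"
      using x s assms by (auto simp: centralizer_def)
    have "inv x \<otimes> s = inv x \<otimes> (s \<otimes> x) \<otimes> inv x"
      using s_carrier x_carrier by (simp only: m_assoc inv_closed r_inv r_one m_closed)
    also have "\<dots> = s \<otimes> inv x"
      using s_carrier x_carrier by (simp add: m_assoc[symmetric] flip: xs)
    finally show ?thesis .
  qed
  then show "inv x \<in> centralizer G S"
    using x by (simp add: centralizer_def)
next
  fix x y assume x: "x \<in> centralizer G S" and y: "y \<in> centralizer G S"
  have "x \<otimes> y \<otimes> s = s \<otimes> (x \<otimes> y)" if s: "s \<in> S" for s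
  proof -
    have xs: "x \<otimes> s = s \<otimes> x" and ys: "y \<otimes> s = s \<otimes> y"
      and carrier: "s \<in> carrier G" "x \<in> carrier G" "y \<in> carrier G"
      using x y s assms by (auto simp: centralizer_def)
    have "x \<otimes> y \<otimes> s = x \<otimes> (s \<otimes> y)"
      using carrier by (simp add: m_assoc ys)
    also have "\<dots> = s \<otimes> (x \<otimes> y)"
      using carrier by (simp add: m_assoc[symmetric] xs)
    finally show ?thesis .
  qed
  then show "x \<otimes> y \<in> centralizer G S"
    using x y by (simp add: centralizer_def)
qed

lemma group_center_eq_centralizer: "group_center G = centralizer G (carrier G)"
  unfolding group_center_def centralizer_def ..

lemma group_center_subset_centralizer: "S \<subseteq> carrier G \<Longrightarrow> group_center G \<subseteq> centralizer G S"
  unfolding group_center_def centralizer_def by auto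

lemma mem_centralizer_self: "g \<in> carrier G \<Longrightarrow> g \<in> centralizer G {g}"
  unfolding centralizer_def by simp

lemma centralizer_eq_carrier_iff:
  assumes "g \<in> carrier G"
  shows "centralizer G {g} = carrier G \<longleftrightarrow> g \<in> group_center G"
proof
  assume "centralizer G {g} = carrier G"
  then have "h \<otimes> g = g \<otimes> h" if "h \<in> carrier G" for h
    using that unfolding centralizer_def by blast
  then show "g \<in> group_center G"
    using assms unfolding group_center_def by simp
qed (auto simp: centralizer_def group_center_def)

lemma conj_eq_self_iff:
  "g \<in> carrier G \<Longrightarrow> a \<in> carrier G \<Longrightarrow> g \<otimes> a \<otimes> inv g = a \<longleftrightarrow> a \<in> centralizer G {g}"
  using inv_solve_right'[of a "g \<otimes> a" g] by (auto simp: centralizer_def)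

lemma centralizer_eq_abelian_maximal_subgroup:
  assumes A_max: "maximal_subgroup A G" and A_ab: "abelian_subset A G"
    and a: "a \<in> A" "a \<notin> group_center G"
  shows "centralizer G {a} = A"
proof -
  have A: "subgroup A G"
    using A_max by (simp add: maximal_subgroup_def)
  have a_carrier: "a \<in> carrier G"
    using a subgroup.subset[OF A] by blast
  have "A \<subseteq> centralizer G {a}"
  proof
    fix x assume x: "x \<in> A"
    then have "x \<otimes> a = a \<otimes> x"
      using A_ab a(1) unfolding abelian_subset_def by blast
    then show "x \<in> centralizer G {a}"
      using x subgroup.subset[OF A] by (auto simp: centralizer_def)
  qed
  moreover have "centralizer G {a} \<noteq> carrier G"
    using centralizer_eq_carrier_iff[OF a_carrier] a(2) by simp
  ultimately show ?thesis
    using A_max subgroup_centralizer[of "{a}"] a_carrier unfolding maximal_subgroup_def by auto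
qed

lemma group_actionI:
  assumes closed: "\<And>g x. g \<in> carrier G \<Longrightarrow> x \<in> E \<Longrightarrow> \<phi> g x \<in> E"
    and extensional: "\<And>g. g \<in> carrier G \<Longrightarrow> \<phi> g \<in> extensional E"
    and one: "\<And>x. x \<in> E \<Longrightarrow> \<phi> \<one> x = x"
    and mult: "\<And>g h x. \<lbrakk>g \<in> carrier G; h \<in> carrier G; x \<in> E\<rbrakk> \<Longrightarrow> \<phi> (g \<otimes> h) x = \<phi> g (\<phi> h x)"
  shows "group_action G E \<phi>"
proof -
  have bij: "\<phi> g \<in> Bij E" if g: "g \<in> carrier G" for g
  proof -
    have "\<phi> (inv g) (\<phi> g x) = x" "\<phi> g (\<phi> (inv g) x) = x" if "x \<in> E" for x
      using g that by (simp_all flip: mult add: one)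
    then have "bij_betw (\<phi> g) E E"
      using g closed by (intro bij_betw_byWitness[where f' = "\<phi> (inv g)"]) auto
    then show ?thesis
      using extensional[OF g] by (simp add: Bij_def)
  qed
  have "\<phi> (g \<otimes> h) = \<phi> g \<otimes>\<^bsub>BijGroup E\<^esub> \<phi> h" if "g \<in> carrier G" "h \<in> carrier G" for g h
    using that bij closed extensional
    by (auto simp: BijGroup_def compose_def mult extensional_def intro!: ext)
  then show ?thesis
    using bij
    by (auto simp: group_action_def group_hom_def group_hom_axioms_def group_BijGroup is_group
        intro!: homI) (simp add: BijGroup_def)
qed

lemma conj_tuple_action:
  "group_action G (tuples G n) (\<lambda>g. restrict (conj_tuple G n g) (tuples G n))"
proof (rule group_actionI)
  fix g x assume "g \<in> carrier G" "x \<in> tuples G n"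
  then show "restrict (conj_tuple G n g) (tuples G n) x \<in> tuples G n"
    by (auto simp: tuples_def conj_tuple_def)
next
  fix x assume "x \<in> tuples G n"
  then show "restrict (conj_tuple G n \<one>) (tuples G n) x = x"
    by (auto simp: tuples_def conj_tuple_def PiE_iff extensional_def)
next
  fix g h x assume "g \<in> carrier G" "h \<in> carrier G" "x \<in> tuples G n"
  then show "restrict (conj_tuple G n (g \<otimes> h)) (tuples G n) x =
      restrict (conj_tuple G n g) (tuples G n) (restrict (conj_tuple G n h) (tuples G n) x)"
    by (auto simp: tuples_def conj_tuple_def PiE_iff m_assoc inv_mult_group)
qed simp

lemma conj_tuple_eq_self_iff:
  assumes g: "g \<in> carrier G" and x: "x \<in> tuples G n"
  shows "conj_tuple G n g x = x \<longleftrightarrow> x \<in> {..<n} \<rightarrow>\<^sub>E centralizer G {g}"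
proof -
  have "conj_tuple G n g x = x \<longleftrightarrow> (\<forall>i<n. g \<otimes> x i \<otimes> inv g = x i)"
  proof
    assume "conj_tuple G n g x = x"
    then show "\<forall>i<n. g \<otimes> x i \<otimes> inv g = x i"
      unfolding conj_tuple_def by (metis lessThan_iff restrict_apply')
  next
    assume "\<forall>i<n. g \<otimes> x i \<otimes> inv g = x i"
    then show "conj_tuple G n g x = x"
      using x unfolding conj_tuple_def tuples_def by (auto simp: PiE_def extensional_def)
  qed
  also have "\<dots> \<longleftrightarrow> (\<forall>i<n. x i \<in> centralizer G {g})"
    using x g by (simp add: conj_eq_self_iff tuples_def PiE_iff)
  also have "\<dots> \<longleftrightarrow> x \<in> {..<n} \<rightarrow>\<^sub>E centralizer G {g}"
    using x by (auto simp: tuples_def PiE_def Pi_def)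
  finally show ?thesis .
qed

lemma alpha_mult_order_eq_sum_centralizers:
  assumes fin: "finite (carrier G)"
  shows "alpha G n * order G = (\<Sum>g\<in>carrier G. card (centralizer G {g}) ^ n)"
proof -
  let ?\<phi> = "\<lambda>g. restrict (conj_tuple G n g) (tuples G n)"
  interpret conj: group_action G "tuples G n" ?\<phi>
    by (rule conj_tuple_action)
  have "orbit G ?\<phi> x = conj_rel G n `` {x}" if "x \<in> tuples G n" for x
    using that conj.element_image by (auto simp: orbit_def conj_rel_def)
  then have orbits: "orbits G (tuples G n) ?\<phi> = tuples G n // conj_rel G n"
    unfolding orbits_def quotient_def by auto
  have invariants: "invariants (tuples G n) ?\<phi> g = {..<n} \<rightarrow>\<^sub>E centralizer G {g}"
    if "g \<in> carrier G" for g
    using that conj_tuple_eq_self_iff subgroup.subset[OF subgroup_centralizer, of "{g}"]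
    by (auto simp: invariants_def tuples_def PiE_def Pi_def)
  have "finite (tuples G n)"
    using fin by (simp add: tuples_def finite_PiE)
  then show ?thesis
    using conj.burnside[OF fin] by (simp add: alpha_def orbits invariants card_PiE)
qed

lemma A_series_three_centralizer_cards:
  assumes fin: "finite (carrier G)" and distinct: "distinct [a, b, c]"
    and cards: "\<And>g. g \<in> carrier G \<Longrightarrow> card (centralizer G {g}) \<in> {a, b, c}"
  defines "N \<equiv> \<lambda>k. real (card (elems_with_centralizer_card G k))"
  shows "A_series G = fps_const (1 / real (order G)) *
           (fps_const (N a) * geom (real a) + fps_const (N b) * geom (real b)
            + fps_const (N c) * geom (real c))"
    and "N a + N b + N c = real (order G)"
proof -
  have image: "(\<lambda>g. card (centralizer G {g})) ` carrier G \<subseteq> {a, b, c}"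
    using cards by auto
  have "order G > 0"
    using fin by (simp add: order_gt_0_iff_finite)
  have "real (alpha G n) = (N a * real a ^ n + N b * real b ^ n + N c * real c ^ n) / real (order G)"
    for n
  proof -
    have "real (alpha G n) * real (order G) = (\<Sum>g\<in>carrier G. real (card (centralizer G {g})) ^ n)"
      using arg_cong[OF alpha_mult_order_eq_sum_centralizers[OF fin], of real] by simp
    also have "\<dots> = N a * real a ^ n + N b * real b ^ n + N c * real c ^ n"
      using sum_three_values[OF fin image distinct, of "\<lambda>k. real k ^ n"]
      by (simp add: N_def elems_with_centralizer_card_def)
    finally show ?thesis
      using \<open>order G > 0\<close> by (simp add: eq_divide_eq)
  qed
  then show "A_series G = fps_const (1 / real (order G)) *
           (fps_const (N a) * geom (real a) + fps_const (N b) * geom (real b)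
            + fps_const (N c) * geom (real c))"
    by (intro fps_ext) (simp add: A_series_def geom_nth fps_mult_left_const_nth)
  show "N a + N b + N c = real (order G)"
    using sum_three_values[OF fin image distinct, of "\<lambda>_. 1 :: real"]
    by (simp add: N_def elems_with_centralizer_card_def order_def)
qed

text \<open>Acting by \<open>inv h\<close> makes right multiplication of cosets a left action.\<close>

lemma right_coset_action:
  assumes H: "subgroup H G"
  shows "group_action (G\<lparr>carrier := H\<rparr>) (rcosets H) (\<lambda>h. \<lambda>C\<in>rcosets H. C #> inv h)"
proof -
  have H_carrier: "H \<subseteq> carrier G" and C_carrier: "\<And>C. C \<in> rcosets H \<Longrightarrow> C \<subseteq> carrier G"
    using subgroup.subset[OF H] subgroup.rcosets_carrier[OF H is_group] by auto
  have closed: "C #> inv h \<in> rcosets H" if C: "C \<in> rcosets H" and h: "h \<in> H" for C h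
  proof -
    obtain y where y: "y \<in> carrier G" "C = H #> y"
      using C unfolding RCOSETS_def by blast
    have inv_h: "inv h \<in> carrier G"
      using h H_carrier by blast
    have "C #> inv h = H #> (y \<otimes> inv h)"
      unfolding y(2) by (rule coset_mult_assoc[OF H_carrier y(1) inv_h])
    then show ?thesis
      using rcosetsI[OF H_carrier m_closed[OF y(1) inv_h]] by simp
  qed
  show ?thesis
  proof (rule group.group_actionI[OF subgroup_imp_group[OF H]], goal_cases)
    case (1 h C)
    then show ?case
      using closed by simp
  next
    case (3 C)
    then show ?case
      using C_carrier by simp
  next
    case (4 g h C)
    then have "g \<in> carrier G" "h \<in> carrier G"
      using H_carrier by auto
    then have "C #> inv (g \<otimes> h) = C #> inv h #> inv g"
      using C_carrier[OF 4(3)] by (simp add: coset_mult_assoc inv_mult_group)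
    then show ?case
      using 4 closed by simp
  qed simp
qed

lemma rcoset_fixed_imp_conj_mem:
  assumes H: "subgroup H G" and x: "x \<in> carrier G" and h: "h \<in> H"
    and fixed: "H #> x #> h = H #> x"
  shows "x \<otimes> h \<otimes> inv x \<in> H"
proof -
  have "H #> x \<subseteq> carrier G" "h \<in> carrier G"
    using subgroup.subset[OF H] r_coset_subset_G x h by auto
  then have "x \<otimes> h \<in> H #> x #> h"
    using rcosI rcos_self[OF x H] by blast
  then have "x \<otimes> h \<in> H #> x"
    using fixed by simp
  then show ?thesis
    by (rule subgroup.rcos_module_imp[OF H is_group x])
qed

lemma normalizer_eq_conj_closed:
  assumes fin: "finite (carrier G)" and H: "subgroup H G"
  shows "normalizer G H = {x \<in> carrier G. \<forall>h\<in>H. x \<otimes> h \<otimes> inv x \<in> H}"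
proof -
  have H_carrier: "H \<subseteq> carrier G"
    using subgroup.subset[OF H] .
  have "x <# H #> inv x = H \<longleftrightarrow> (\<forall>h\<in>H. x \<otimes> h \<otimes> inv x \<in> H)" if x: "x \<in> carrier G" for x
  proof -
    let ?c = "\<lambda>h. x \<otimes> h \<otimes> inv x"
    have conj_image: "x <# H #> inv x = ?c ` H"
      unfolding l_coset_def r_coset_def by blast
    have "inj_on ?c H"
      using x H_carrier by (intro inj_onI) (simp add: subset_iff)
    then have "card (?c ` H) = card H"
      by (rule card_image)
    then have "?c ` H \<subseteq> H \<Longrightarrow> ?c ` H = H"
      using finite_subset[OF H_carrier fin] by (simp add: card_subset_eq)
    then show ?thesis
      unfolding conj_image by blast
  qed
  then show ?thesis
    using H_carrier by (auto simp: normalizer_def stabilizer_def)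
qed

lemma inter_rcoset_eq:
  assumes A: "subgroup A G" and C: "subgroup C G" and c: "c \<in> C"
  shows "C \<inter> (A #> c) = (C \<inter> A) #> c"
proof
  have c_carrier: "c \<in> carrier G"
    using c subgroup.subset[OF C] by blast
  show "C \<inter> (A #> c) \<subseteq> (C \<inter> A) #> c"
  proof
    fix x assume x: "x \<in> C \<inter> (A #> c)"
    then obtain a where a: "a \<in> A" "x = a \<otimes> c"
      unfolding r_coset_def by blast
    have "a = x \<otimes> inv c"
      using a subgroup.subset[OF A] c_carrier by (auto simp: m_assoc)
    then have "a \<in> C"
      using x c C by (simp add: subgroup.m_closed subgroup.m_inv_closed)
    then show "x \<in> (C \<inter> A) #> c"
      using a unfolding r_coset_def by blast
  qed
  show "(C \<inter> A) #> c \<subseteq> C \<inter> (A #> c)"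
    using c C unfolding r_coset_def by (auto simp: subgroup.m_closed)
qed

lemma card_le_index_mult_card_inter:
  assumes fin: "finite (carrier G)" and A: "subgroup A G" and C: "subgroup C G"
  shows "card C \<le> card (rcosets A) * card (C \<inter> A)"
proof -
  have C_carrier: "C \<subseteq> carrier G"
    using subgroup.subset[OF C] .
  have "card (C \<inter> R) \<le> card (C \<inter> A)" if R: "R \<in> rcosets A" for R
  proof (cases "C \<inter> R = {}")
    case False
    then obtain c where c: "c \<in> C" "c \<in> R"
      by blast
    obtain y where y: "y \<in> carrier G" "R = A #> y"
      using R unfolding RCOSETS_def by blast
    then have "C \<inter> R = (C \<inter> A) #> c"
      using repr_independence[OF _ y(1) A] c inter_rcoset_eq[OF A C c(1)] by simp
    also have "card \<dots> = card (C \<inter> A)"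
    proof -
      have "C \<inter> A \<subseteq> carrier G" "c \<in> carrier G"
        using c(1) C_carrier by auto
      then show ?thesis
        using card_rcosets_equal[OF rcosetsI] by metis
    qed
    finally show ?thesis
      by simp
  qed simp
  have "C = (\<Union>R\<in>rcosets A. C \<inter> R)"
    using rcosets_part_G[OF A] C_carrier by blast
  then have "card C \<le> (\<Sum>R\<in>rcosets A. card (C \<inter> R))"
    by (metis card_UN_le finite_subset[OF rcosets_subset_PowG[OF A]] fin finite_Pow_iff)
  also have "\<dots> \<le> (\<Sum>R\<in>rcosets A. card (C \<inter> A))"
    by (rule sum_mono) fact
  finally show ?thesis
    by simp
qed

end

lemma (in normal) factgroup_subgroup_eq_rcosets:
  assumes "subgroup S (G Mod H)" "\<Union>S = carrier G"
  shows "S = rcosets H"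
  using factgroup_subgroup_union_factor[OF assms(1)] assms(2) by simp

lemma (in normal) factgroup_subgroup_eq_singleton:
  assumes "subgroup S (G Mod H)" "\<Union>S = H"
  shows "S = {H}"
proof -
  have "H \<noteq> {}"
    using subgroup.one_closed[OF is_subgroup] by blast
  then show ?thesis
    using factgroup_subgroup_union_factor[OF assms(1)] assms(2)
    by (auto simp: RCOSETS_def coset_join2 is_subgroup)
qed

section \<open>Finite p-groups\<close>

locale finite_p_group = group G for G (structure) +
  fixes p m :: nat
  assumes prime_p: "Factorial_Ring.prime p" and order_eq: "order G = p ^ m"
begin

lemma one_less_p: "1 < p"
  using prime_p by (rule prime_gt_1_nat)

lemma finite_carrier: "finite (carrier G)"
proof -
  have "0 < order G"
    using one_less_p by (simp add: order_eq)
  then show ?thesis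
    by (simp add: order_gt_0_iff_finite)
qed

lemma card_carrier: "card (carrier G) = p ^ m"
  using order_eq by (simp add: order_def)

lemma finite_subgroup: "subgroup H G \<Longrightarrow> finite H"
  using finite_carrier subgroup.subset by (rule finite_subset[rotated])

lemma finite_rcosets: "subgroup H G \<Longrightarrow> finite (rcosets H)"
  using finite_carrier rcosets_subset_PowG by (meson finite_Pow_iff finite_subset)

lemma card_subgroup_eq_power:
  assumes "subgroup H G"
  shows "\<exists>k\<le>m. card H = p ^ k"
proof -
  have "card H dvd p ^ m"
    using lagrange[OF assms] order_eq by (metis dvd_triv_right)
  then show ?thesis
    by (simp add: divides_primepow_nat[OF prime_p])
qed

lemma card_subgroup_psubset:
  assumes "subgroup H G" "subgroup K G" "H \<subset> K"
  shows "p * card H \<le> card K"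
proof -
  obtain i j where i: "card H = p ^ i" and j: "card K = p ^ j"
    using card_subgroup_eq_power assms(1,2) by blast
  have "card H < card K"
    using psubset_card_mono[OF finite_subgroup[OF assms(2)] assms(3)] .
  then have "i < j"
    using i j one_less_p by simp
  then have "p ^ Suc i \<le> p ^ j"
    using one_less_p by (intro power_increasing) simp_all
  then show ?thesis
    using i j by simp
qed

lemma subgroup_eq_carrier_iff_card:
  assumes "subgroup H G"
  shows "H = carrier G \<longleftrightarrow> card H = p ^ m"
  using card_subset_eq[OF finite_carrier subgroup.subset[OF assms]] card_carrier by auto

lemma p_dvd_index:
  assumes H: "subgroup H G" and "H \<noteq> carrier G"
  shows "p dvd card (rcosets H)"
proof -
  have index: "card (rcosets H) * card H = p ^ m"
    using lagrange[OF H] order_eq by simp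
  then obtain j where j: "card (rcosets H) = p ^ j"
    using divides_primepow_nat[OF prime_p] by (metis dvd_triv_left)
  have "card (rcosets H) \<noteq> 1"
    using index assms(2) subgroup_eq_carrier_iff_card[OF H] by auto
  then show ?thesis
    using j by (cases j) auto
qed

lemma maximal_subgroup_if_index_p:
  assumes H: "subgroup H G" and index: "p * card H = p ^ m"
  shows "maximal_subgroup H G"
  unfolding maximal_subgroup_def
proof (intro conjI allI impI)
  show "H \<noteq> carrier G"
  proof
    assume "H = carrier G"
    then have "p * p ^ m = 1 * p ^ m"
      using index card_carrier by simp
    then show False
      using one_less_p by simp
  qed
  fix K assume K: "subgroup K G \<and> H \<subseteq> K"
  show "K = H \<or> K = carrier G"
  proof (cases "K = H")
    case False
    then have "p ^ m \<le> card K"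
      using card_subgroup_psubset[OF H] K index by fastforce
    moreover have "card K \<le> p ^ m"
      using card_mono[OF finite_carrier subgroup.subset] K card_carrier by auto
    ultimately show ?thesis
      using subgroup_eq_carrier_iff_card K by simp
  qed simp
qed (rule H)

text \<open>A proper subgroup \<open>H\<close> acts on its right cosets; the number of fixed cosets is divisible by
  \<open>p\<close> and \<open>H\<close> itself is one of them, so some coset \<open>H #> x\<close> with \<open>x \<notin> H\<close> is fixed.\<close>

lemma exists_normalizing_element:
  assumes H: "subgroup H G" and proper: "H \<noteq> carrier G"
  shows "\<exists>x\<in>carrier G - H. \<forall>h\<in>H. x \<otimes> h \<otimes> inv x \<in> H"
proof -
  let ?\<psi> = "\<lambda>h. \<lambda>C\<in>rcosets H. C #> inv h"
  define F where "F = {C \<in> rcosets H. \<forall>h\<in>H. ?\<psi> h C = C}"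
  interpret coset_action: group_action "G\<lparr>carrier := H\<rparr>" "rcosets H" ?\<psi>
    by (rule right_coset_action[OF H])
  have H_carrier: "H \<subseteq> carrier G"
    using subgroup.subset[OF H] .
  obtain k where "card H = p ^ k"
    using card_subgroup_eq_power[OF H] by blast
  then have "p dvd card F"
    using coset_action.card_fixed_points_mod_prime[OF prime_p _ finite_rcosets[OF H]]
      p_dvd_index[OF H proper]
    by (auto simp: F_def order_def mod_eq_0_iff_dvd)
  moreover have "H \<in> F"
    using H H_carrier rcosetsI[OF H_carrier one_closed]
    by (auto simp: F_def coset_join2 subgroup.m_inv_closed subset_iff)
  moreover have "finite F"
    using finite_rcosets[OF H] by (simp add: F_def)
  ultimately have "p \<le> card F"
    using card_gt_0_iff by (metis dvd_imp_le empty_iff)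
  then have "\<not> F \<subseteq> {H}"
    using card_mono[of "{H}" F] one_less_p by auto
  then obtain C where C: "C \<in> F" "C \<noteq> H"
    by blast
  then obtain x where x: "x \<in> carrier G" and C_eq: "C = H #> x"
    unfolding F_def RCOSETS_def by blast
  have "x \<notin> H"
    using C(2) C_eq coset_join2[OF x H] by blast
  moreover have "x \<otimes> h \<otimes> inv x \<in> H" if h: "h \<in> H" for h
  proof -
    have "C #> inv (inv h) = C"
      using C(1) subgroup.m_inv_closed[OF H h] unfolding F_def by auto
    then have "H #> x #> h = H #> x"
      using h H_carrier C_eq by auto
    then show ?thesis
      by (rule rcoset_fixed_imp_conj_mem[OF H x h])
  qed
  ultimately show ?thesis
    using x by blast
qed

lemma maximal_subgroup_normal:
  assumes A: "maximal_subgroup A G"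
  shows "A \<lhd> G"
proof -
  have A_sub: "subgroup A G" and "A \<noteq> carrier G"
    using A by (auto simp: maximal_subgroup_def)
  have A_carrier: "A \<subseteq> carrier G"
    using subgroup.subset[OF A_sub] .
  let ?N = "normalizer G A"
  have N_eq: "?N = {y \<in> carrier G. \<forall>a\<in>A. y \<otimes> a \<otimes> inv y \<in> A}"
    by (rule normalizer_eq_conj_closed[OF finite_carrier A_sub])
  have "A \<subseteq> ?N"
    unfolding N_eq using A_sub A_carrier
    by (auto simp: subgroup.m_closed subgroup.m_inv_closed)
  moreover have "?N \<noteq> A"
    using exists_normalizing_element[OF A_sub \<open>A \<noteq> carrier G\<close>] unfolding N_eq by blast
  ultimately have "?N = carrier G"
    using A normalizer_imp_subgroup[OF A_carrier] unfolding maximal_subgroup_def by blast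
  then show ?thesis
    using A_sub unfolding normal_inv_iff N_eq by blast
qed

lemma maximal_subgroup_index:
  assumes A: "maximal_subgroup A G"
  shows "card (rcosets A) = p"
proof -
  have A_sub: "subgroup A G" and "A \<noteq> carrier G"
    using A by (auto simp: maximal_subgroup_def)
  interpret normal A G
    by (rule maximal_subgroup_normal[OF A])
  obtain q where "card (rcosets A) = p * q"
    using p_dvd_index[OF A_sub \<open>A \<noteq> carrier G\<close>] by auto
  then have "order (G Mod A) = p ^ 1 * q"
    by (simp add: order_def FactGroup_def)
  moreover have "finite (carrier (G Mod A))"
    using finite_rcosets[OF A_sub] by (simp add: FactGroup_def)
  ultimately obtain S where S: "subgroup S (G Mod A)" "card S = p"
    using sylow_thm[OF prime_p factorgroup_is_group] by (metis power_one_right)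
  have "\<Union>S \<noteq> A"
  proof
    assume "\<Union>S = A"
    then have "card S = 1"
      using factgroup_subgroup_eq_singleton[OF S(1)] by simp
    with S(2) one_less_p show False
      by simp
  qed
  moreover have "A \<subseteq> \<Union>S"
    using subgroup.one_closed[OF S(1)] by auto
  ultimately have "\<Union>S = carrier G"
    using A factgroup_subgroup_union_subgroup[OF S(1)] unfolding maximal_subgroup_def by blast
  then show ?thesis
    using factgroup_subgroup_eq_rcosets[OF S(1)] S(2) by simp
qed

lemma card_maximal_subgroup:
  assumes "maximal_subgroup A G"
  shows "p * card A = p ^ m"
  using lagrange[of A] maximal_subgroup_index[OF assms] assms order_eq
  by (simp add: maximal_subgroup_def)

lemma abelian_if_center_index_le_p:
  assumes H: "subgroup H G" and index: "card H \<le> p * card (H \<inter> centralizer G H)"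
  shows "abelian_subset H G"
  unfolding abelian_subset_def
proof (intro ballI)
  fix x y assume x: "x \<in> H" and y: "y \<in> H"
  have H_carrier: "H \<subseteq> carrier G"
    using subgroup.subset[OF H] .
  let ?Z = "H \<inter> centralizer G H"
  show "x \<otimes> y = y \<otimes> x"
  proof (cases "x \<in> ?Z")
    case True
    then show ?thesis
      using y by (simp add: centralizer_def)
  next
    case False
    let ?K = "H \<inter> centralizer G {x}"
    have Z: "subgroup ?Z G" and K: "subgroup ?K G"
      using x H_carrier by (auto intro!: subgroups_Inter_pair H subgroup_centralizer)
    have "?Z \<subset> ?K"
      using False x H_carrier by (auto simp: centralizer_def)
    then have "card H \<le> card ?K"
      using card_subgroup_psubset[OF Z K] index by simp
    then have "?K = H"
      using card_seteq[OF finite_subgroup[OF H]] by blast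
    then have "y \<otimes> x = x \<otimes> y"
      using y unfolding centralizer_def by blast
    then show ?thesis ..
  qed
qed

end

section \<open>Groups whose center has index \<open>p\<^sup>3\<close>\<close>

locale center_index_p_cube = finite_p_group +
  assumes center_index: "order (G Mod group_center G) = p ^ 3"
begin

abbreviation Z :: "'a set" where "Z \<equiv> group_center G"

lemma Z_subgroup: "subgroup Z G"
  using subgroup_centralizer[of "carrier G"] by (simp add: group_center_eq_centralizer)

lemma card_center: "card Z = p ^ (m - 3)" and three_le_m: "3 \<le> m"
proof -
  obtain j where j: "card Z = p ^ j"
    using card_subgroup_eq_power[OF Z_subgroup] by blast
  have "card (rcosets Z) = p ^ 3"
    using center_index by (simp add: order_def FactGroup_def)
  then have "p ^ (3 + j) = p ^ m"
    using lagrange[OF Z_subgroup] order_eq j by (simp add: power_add)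
  then have "3 + j = m"
    using one_less_p by simp
  then show "card Z = p ^ (m - 3)" "3 \<le> m"
    using j by auto
qed

lemma p_mult_powers:
  "p * p ^ (m - 3) = p ^ (m - 2)" "p * p ^ (m - 2) = p ^ (m - 1)" "p * p ^ (m - 1) = p ^ m"
proof -
  have "Suc (m - 3) = m - 2" "Suc (m - 2) = m - 1" "Suc (m - 1) = m"
    using three_le_m by auto
  then show "p * p ^ (m - 3) = p ^ (m - 2)" "p * p ^ (m - 2) = p ^ (m - 1)" "p * p ^ (m - 1) = p ^ m"
    by (metis power_Suc)+
qed

lemma distinct_centralizer_cards: "distinct [p ^ m, p ^ (m - 1), p ^ (m - 2)]"
  using three_le_m one_less_p by (simp add: power_inject_exp) arith

lemma card_centralizer_central:
  assumes "g \<in> Z"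
  shows "card (centralizer G {g}) = p ^ m"
proof -
  have "g \<in> carrier G"
    using assms subgroup.subset[OF Z_subgroup] by blast
  then show ?thesis
    using assms centralizer_eq_carrier_iff[OF \<open>g \<in> carrier G\<close>] card_carrier by simp
qed

text \<open>For \<open>g \<notin> Z\<close> we have \<open>Z \<subset> C(g) \<subset> G\<close>, leaving room for only two orders.\<close>

lemma card_centralizer_noncentral:
  assumes g: "g \<in> carrier G" "g \<notin> Z"
  shows "card (centralizer G {g}) = p ^ (m - 2) \<or> card (centralizer G {g}) = p ^ (m - 1)"
proof -
  let ?C = "centralizer G {g}"
  have C: "subgroup ?C G"
    using g by (simp add: subgroup_centralizer)
  obtain k where k: "card ?C = p ^ k"
    using card_subgroup_eq_power[OF C] by blast
  have "Z \<subset> ?C"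
    using g group_center_subset_centralizer[of "{g}"] mem_centralizer_self[of g] by auto
  then have "p ^ Suc (m - 3) \<le> p ^ k"
    using card_subgroup_psubset[OF Z_subgroup C] card_center k by simp
  then have "m - 2 \<le> k"
    using three_le_m by (simp only: power_increasing_iff[OF one_less_p])
  have "?C \<subset> carrier G"
    using g centralizer_eq_carrier_iff subgroup.subset[OF C] by blast
  then have "p ^ Suc k \<le> p ^ m"
    using card_subgroup_psubset[OF C subgroup_self] card_carrier k by simp
  then have "Suc k \<le> m"
    by (simp only: power_increasing_iff[OF one_less_p])
  then have "k = m - 2 \<or> k = m - 1"
    using \<open>m - 2 \<le> k\<close> by linarith
  then show ?thesis
    using k by auto
qed

lemma card_centralizer_cases:
  "g \<in> carrier G \<Longrightarrow> card (centralizer G {g}) \<in> {p ^ m, p ^ (m - 1), p ^ (m - 2)}"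
  using card_centralizer_noncentral card_centralizer_central by blast

lemma elems_with_centralizer_card_top: "elems_with_centralizer_card G (p ^ m) = Z"
proof -
  have "card (centralizer G {g}) = p ^ m \<longleftrightarrow> g \<in> Z" if g: "g \<in> carrier G" for g
  proof (cases "g \<in> Z")
    case False
    then show ?thesis
      using card_centralizer_noncentral[OF g False] distinct_centralizer_cards by auto
  qed (simp add: card_centralizer_central)
  then show ?thesis
    using subgroup.subset[OF Z_subgroup] by (auto simp: elems_with_centralizer_card_def)
qed

text \<open>The center of \<open>C(g)\<close> contains \<open>Z\<close> and \<open>g\<close>, so it has index at most \<open>p\<close> in \<open>C(g)\<close>.\<close>

lemma centralizer_maximal_abelian:
  assumes g: "g \<in> carrier G" and card_C: "card (centralizer G {g}) = p ^ (m - 1)"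
  shows "maximal_subgroup (centralizer G {g}) G" "abelian_subset (centralizer G {g}) G"
proof -
  let ?C = "centralizer G {g}"
  have C: "subgroup ?C G" and C_carrier: "?C \<subseteq> carrier G"
    using g subgroup_centralizer subgroup.subset by auto
  show "maximal_subgroup ?C G"
    using maximal_subgroup_if_index_p[OF C] card_C p_mult_powers by simp
  have "g \<notin> Z"
    using card_centralizer_central card_C distinct_centralizer_cards by auto
  then have "Z \<subset> ?C \<inter> centralizer G ?C"
    using g C_carrier group_center_subset_centralizer mem_centralizer_self
    by (auto simp: centralizer_def)
  then have center_C: "p ^ (m - 2) \<le> card (?C \<inter> centralizer G ?C)"
    using card_subgroup_psubset[OF Z_subgroup subgroups_Inter_pair[OF C subgroup_centralizer[OF C_carrier]]]
      card_center p_mult_powers by simp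
  have "card ?C \<le> p * card (?C \<inter> centralizer G ?C)"
    using mult_le_mono2[OF center_C, of p] card_C p_mult_powers(2) by simp
  then show "abelian_subset ?C G"
    by (rule abelian_if_center_index_le_p[OF C])
qed

context
  fixes A
  assumes A_max: "maximal_subgroup A G" and A_ab: "abelian_subset A G"
begin

lemma subgroup_abelian_maximal: "subgroup A G"
  using A_max by (simp add: maximal_subgroup_def)

lemma card_abelian_maximal: "card A = p ^ (m - 1)"
proof -
  have "p * card A = p * p ^ (m - 1)"
    using card_maximal_subgroup[OF A_max] p_mult_powers(3) by simp
  then show ?thesis
    using one_less_p by simp
qed

lemma center_subset_abelian_maximal: "Z \<subseteq> A"
proof -
  have "\<not> A \<subseteq> Z"
  proof
    assume "A \<subseteq> Z"
    then have "p ^ (m - 1) \<le> p ^ (m - 3)"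
      using card_mono[OF finite_subgroup[OF Z_subgroup] \<open>A \<subseteq> Z\<close>] card_abelian_maximal card_center
      by simp
    then show False
      using one_less_p three_le_m by simp
  qed
  then obtain a where a: "a \<in> A" "a \<notin> Z"
    by blast
  then show ?thesis
    using centralizer_eq_abelian_maximal_subgroup[OF A_max A_ab a]
      group_center_subset_centralizer[of "{a}"] subgroup.subset[OF subgroup_abelian_maximal] by blast
qed

text \<open>For \<open>g \<notin> A\<close> we have \<open>C(g) \<inter> A \<subseteq> Z\<close>, and \<open>A\<close> has index \<open>p\<close>, so \<open>|C(g)| \<le> p \<cdot> |Z|\<close>.\<close>

lemma card_centralizer_outside_abelian_maximal:
  assumes g: "g \<in> carrier G" "g \<notin> A"
  shows "card (centralizer G {g}) = p ^ (m - 2)"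
proof -
  let ?C = "centralizer G {g}"
  have C: "subgroup ?C G"
    using g by (simp add: subgroup_centralizer)
  have "?C \<inter> A \<subseteq> Z"
  proof
    fix x assume x: "x \<in> ?C \<inter> A"
    show "x \<in> Z"
    proof (rule ccontr)
      assume "x \<notin> Z"
      then have "g \<in> centralizer G {x}"
        using x g unfolding centralizer_def by auto
      then show False
        using centralizer_eq_abelian_maximal_subgroup[OF A_max A_ab _ \<open>x \<notin> Z\<close>] x g by blast
    qed
  qed
  then have inter: "card (?C \<inter> A) \<le> p ^ (m - 3)"
    using card_mono[OF finite_subgroup[OF Z_subgroup] \<open>?C \<inter> A \<subseteq> Z\<close>] card_center by simp
  have "card ?C \<le> p * card (?C \<inter> A)"
    using card_le_index_mult_card_inter[OF finite_carrier subgroup_abelian_maximal C]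
      maximal_subgroup_index[OF A_max] by simp
  also have "\<dots> \<le> p ^ (m - 2)"
    using mult_le_mono2[OF inter, of p] p_mult_powers(1) by simp
  finally have "card ?C \<le> p ^ (m - 2)" .
  moreover have "p ^ (m - 2) < p ^ (m - 1)"
    using one_less_p three_le_m by simp
  moreover have "g \<notin> Z"
    using g center_subset_abelian_maximal by blast
  ultimately show ?thesis
    using card_centralizer_noncentral[OF g(1)] by auto
qed

lemma elems_with_centralizer_card_index_p: "elems_with_centralizer_card G (p ^ (m - 1)) = A - Z"
proof
  show "A - Z \<subseteq> elems_with_centralizer_card G (p ^ (m - 1))"
    using centralizer_eq_abelian_maximal_subgroup[OF A_max A_ab] card_abelian_maximal
      subgroup.subset[OF subgroup_abelian_maximal]
    by (auto simp: elems_with_centralizer_card_def)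
  show "elems_with_centralizer_card G (p ^ (m - 1)) \<subseteq> A - Z"
  proof
    fix g assume "g \<in> elems_with_centralizer_card G (p ^ (m - 1))"
    then have g: "g \<in> carrier G" "card (centralizer G {g}) = p ^ (m - 1)"
      by (auto simp: elems_with_centralizer_card_def)
    then have "g \<in> A"
      using card_centralizer_outside_abelian_maximal[of g] distinct_centralizer_cards by auto
    moreover have "g \<notin> Z"
      using g(2) card_centralizer_central[of g] distinct_centralizer_cards by auto
    ultimately show "g \<in> A - Z" ..
  qed
qed

end

lemma card_elems_with_centralizer_card_index_p:
  "card (elems_with_centralizer_card G (p ^ (m - 1))) =
     (if \<exists>H. maximal_subgroup H G \<and> abelian_subset H G then p ^ (m - 1) - p ^ (m - 3) else 0)"
proof (cases "\<exists>H. maximal_subgroup H G \<and> abelian_subset H G")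
  case True
  then obtain A where A: "maximal_subgroup A G" "abelian_subset A G"
    by blast
  then show ?thesis
    using elems_with_centralizer_card_index_p[OF A] center_subset_abelian_maximal[OF A]
      card_abelian_maximal[OF A] card_Diff_subset[OF finite_subgroup[OF Z_subgroup]] card_center True
    by simp
next
  case False
  then have "elems_with_centralizer_card G (p ^ (m - 1)) = {}"
    using centralizer_maximal_abelian by (auto simp: elems_with_centralizer_card_def)
  then show ?thesis
    using False by (subst if_not_P) simp_all
qed


lemma A_series_by_count_index_p:
  defines "N \<equiv> real (card (elems_with_centralizer_card G (p ^ (m - 1))))"
  shows "A_series G = fps_const (1 / real p ^ m) *
      (fps_const (real p ^ (m - 3)) * geom (real p ^ m) + fps_const N * geom (real p ^ (m - 1))
       + fps_const (real p ^ m - real p ^ (m - 3) - N) * geom (real p ^ (m - 2)))"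
proof -
  let ?N = "\<lambda>k. real (card (elems_with_centralizer_card G k))"
  have series: "A_series G = fps_const (1 / real p ^ m) *
      (fps_const (?N (p ^ m)) * geom (real p ^ m) + fps_const N * geom (real p ^ (m - 1))
       + fps_const (?N (p ^ (m - 2))) * geom (real p ^ (m - 2)))"
    and partition: "?N (p ^ m) + N + ?N (p ^ (m - 2)) = real p ^ m"
    using A_series_three_centralizer_cards[OF finite_carrier distinct_centralizer_cards
        card_centralizer_cases]
    by (simp_all add: N_def order_eq)
  have top: "?N (p ^ m) = real p ^ (m - 3)"
    by (simp add: elems_with_centralizer_card_top card_center)
  then have "?N (p ^ (m - 2)) = real p ^ m - real p ^ (m - 3) - N"
    using partition by linarith
  then show ?thesis
    by (simp only: series top)
qed

end

theorem theorem7p3: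
  fixes G :: "('a, 'b) monoid_scheme" and p m :: nat
  assumes "group G" and "Factorial_Ring.prime p" and "finite (carrier G)"
    and "order G = p ^ m"
    and "order (G Mod group_center G) = p ^ 3"
  shows "(\<not> (\<exists>H. maximal_subgroup H G \<and> abelian_subset H G) \<longrightarrow>
           A_series G = fps_const (1 / real p ^ m) *
             (fps_const (real p ^ (m - 3)) * geom (real p ^ m)
              + fps_const (real p ^ m - real p ^ (m - 3)) * geom (real p ^ (m - 2))))
       \<and> ((\<exists>H. maximal_subgroup H G \<and> abelian_subset H G) \<longrightarrow>
           A_series G = fps_const (1 / real p ^ m) *
             (fps_const (real p ^ (m - 3)) * geom (real p ^ m)
              + fps_const (real p ^ (m - 1) - real p ^ (m - 3)) * geom (real p ^ (m - 1))
              + fps_const (real p ^ m - real p ^ (m - 1)) * geom (real p ^ (m - 2))))"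
proof -
  interpret center_index_p_cube G p m
    by (intro center_index_p_cube.intro finite_p_group.intro finite_p_group_axioms.intro
        center_index_p_cube_axioms.intro) (simp_all add: assms)
  let ?N = "real (card (elems_with_centralizer_card G (p ^ (m - 1))))"
  show ?thesis
  proof (intro conjI impI)
    assume no_abelian: "\<not> (\<exists>H. maximal_subgroup H G \<and> abelian_subset H G)"
    have "?N = 0"
      unfolding card_elems_with_centralizer_card_index_p if_not_P[OF no_abelian] by simp
    then show "A_series G = fps_const (1 / real p ^ m) *
        (fps_const (real p ^ (m - 3)) * geom (real p ^ m)
         + fps_const (real p ^ m - real p ^ (m - 3)) * geom (real p ^ (m - 2)))"
      unfolding A_series_by_count_index_p by simp
  next
    assume abelian: "\<exists>H. maximal_subgroup H G \<and> abelian_subset H G"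
    have "?N = real p ^ (m - 1) - real p ^ (m - 3)"
      unfolding card_elems_with_centralizer_card_index_p if_P[OF abelian]
      using one_less_p three_le_m by (simp add: of_nat_diff)
    then show "A_series G = fps_const (1 / real p ^ m) *
        (fps_const (real p ^ (m - 3)) * geom (real p ^ m)
         + fps_const (real p ^ (m - 1) - real p ^ (m - 3)) * geom (real p ^ (m - 1))
         + fps_const (real p ^ m - real p ^ (m - 1)) * geom (real p ^ (m - 2)))"
      unfolding A_series_by_count_index_p by simp
  qed
qed
end
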